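(* Let $0<H<1$, $1-H<\alpha<1$, and $z_1,z_2>0$. Put $$I=z_2^{2(H+\alpha-1)}+z_1^{2(H+\alpha-1)}+\frac{|z_2-z_1|^{2H}-z_1^{2H}-z_2^{2H}}{(z_1z_2)^{1-\alpha}}.$$ Then $I\le C(H,\alpha)|z_2-z_1|^{2(H+\alpha-1)}$, where $C(H,\alpha)$ depends only on $H$ and $\alpha$. *)

theory Defs
  imports Complex_Main
begin

end

theory Submission
  imports Defs
begin

(* Write beta = H + alpha - 1 and gamma = 1 - alpha, both in (0,1), so that 2H = 2 beta + 2 gamma.
   For 0 < a <= b and d = b - a the quantity of the theorem reads
     I = a^(2 beta) + b^(2 beta) - (a^(2H) + b^(2H)) / (ab)^gamma + d^(2H) / (ab)^gamma.
   A rearrangement inequality shows that the first three terms together are <= 0.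
   Near the diagonal (b <= 2a) we have d^(2 gamma) <= b^gamma b^gamma <= 2 (ab)^gamma,
   so the last term is at most 2 d^(2 beta).  Far from the diagonal (b > 2a) we have
   d^(2H) <= b^(2H), so I <= a^(2 beta) + b^(2 beta) <= 2 b^(2 beta) <= 8 d^(2 beta) since b < 2d.
   Hence I <= 8 |b - a|^(2 beta) when a <= b; the quantity is symmetric in (z1, z2),
   which gives the theorem with C = 8. *)

definition cov_gap :: "real \<Rightarrow> real \<Rightarrow> real \<Rightarrow> real \<Rightarrow> real" where
  "cov_gap H \<alpha> z1 z2 =
     z2 powr (2 * (H + \<alpha> - 1)) + z1 powr (2 * (H + \<alpha> - 1))
     + (\<bar>z2 - z1\<bar> powr (2 * H) - z1 powr (2 * H) - z2 powr (2 * H)) / (z1 * z2) powr (1 - \<alpha>)"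

lemma cov_gap_sym: "cov_gap H \<alpha> z1 z2 = cov_gap H \<alpha> z2 z1"
  by (simp add: cov_gap_def abs_minus_commute mult.commute algebra_simps)

text \<open>Rearrangement inequality for powers: the sequences \<open>t \<mapsto> t powr (r+s)\<close> and
  \<open>t \<mapsto> t powr s\<close> are similarly ordered, which gives
  \<open>(x^r + y^r)(xy)^s \<le> x^(r+2s) + y^(r+2s)\<close>.  This makes the smooth part of the gap nonpositive.\<close>

lemma powr_rearrangement:
  fixes x y r s :: real
  assumes "0 < x" "0 < y" "0 \<le> r" "0 \<le> s"
  shows "(x powr r + y powr r) * (x * y) powr s \<le> x powr (r + 2 * s) + y powr (r + 2 * s)"
proof -
  have similarly_ordered: "0 \<le> (x powr (r + s) - y powr (r + s)) * (x powr s - y powr s)"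
  proof (cases "x \<le> y")
    case True
    then have "x powr (r + s) \<le> y powr (r + s)" "x powr s \<le> y powr s"
      using assms by (simp_all add: powr_mono2)
    then show ?thesis by (simp add: mult_nonpos_nonpos)
  next
    case False
    then have "y powr (r + s) \<le> x powr (r + s)" "y powr s \<le> x powr s"
      using assms by (simp_all add: powr_mono2)
    then show ?thesis by simp
  qed
  have "x powr (r + 2 * s) + y powr (r + 2 * s) - (x powr r + y powr r) * (x * y) powr s
        = (x powr (r + s) - y powr (r + s)) * (x powr s - y powr s)"
  proof -
    have split_x: "x powr (r + 2 * s) = x powr (r + s) * x powr s"
      and split_y: "y powr (r + 2 * s) = y powr (r + s) * y powr s"
      by (simp_all add: powr_add[symmetric] algebra_simps)
    have "(x * y) powr s = x powr s * y powr s" using assms by (simp add: powr_mult)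
    then show ?thesis unfolding split_x split_y by (simp add: powr_add algebra_simps)
  qed
  with similarly_ordered show ?thesis by simp
qed

text \<open>Near the diagonal, the singular term \<open>(b - a)^(2\<beta>+2\<gamma>) / (ab)^\<gamma>\<close> is controlled by
  \<open>2 (b - a)^(2\<beta>)\<close>: indeed \<open>(b - a)^\<gamma> \<le> b^\<gamma> \<le> 2^\<gamma> a^\<gamma> \<le> 2 a^\<gamma>\<close>.\<close>

lemma near_diagonal_bound:
  fixes a b \<beta> \<gamma> :: real
  assumes "0 < a" "a \<le> b" "b \<le> 2 * a" "0 \<le> \<gamma>" "\<gamma> \<le> 1"
  shows "(b - a) powr (2 * \<beta> + 2 * \<gamma>) \<le> 2 * (b - a) powr (2 * \<beta>) * (a * b) powr \<gamma>"
proof -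
  define d where "d = b - a"
  have d: "0 \<le> d" "d \<le> b" using assms by (simp_all add: d_def)
  have "b powr \<gamma> \<le> (2 * a) powr \<gamma>" using assms by (simp add: powr_mono2)
  also have "\<dots> = 2 powr \<gamma> * a powr \<gamma>" using assms by (simp add: powr_mult)
  also have "\<dots> \<le> 2 * a powr \<gamma>"
    using assms powr_mono[of \<gamma> 1 2] by (intro mult_right_mono) auto
  finally have b_le: "b powr \<gamma> \<le> 2 * a powr \<gamma>" .
  have "d powr \<gamma> * d powr \<gamma> \<le> b powr \<gamma> * b powr \<gamma>"
    using d assms by (intro mult_mono powr_mono2) auto
  also have "\<dots> \<le> 2 * a powr \<gamma> * b powr \<gamma>"
    using b_le by (intro mult_right_mono) auto
  also have "\<dots> = 2 * (a * b) powr \<gamma>" using assms by (simp add: powr_mult)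
  finally have "d powr \<gamma> * d powr \<gamma> \<le> 2 * (a * b) powr \<gamma>" .
  then have "d powr (2 * \<beta>) * (d powr \<gamma> * d powr \<gamma>) \<le> d powr (2 * \<beta>) * (2 * (a * b) powr \<gamma>)"
    by (intro mult_left_mono) auto
  then show ?thesis
    by (simp add: d_def powr_add[symmetric] mult_ac)
qed

text \<open>Far from the diagonal (\<open>2a \<le> b\<close>) both endpoints are dominated by the distance,
  since then \<open>a \<le> b \<le> 2(b - a)\<close>.\<close>

lemma far_from_diagonal_bound:
  fixes a b e :: real
  assumes "0 < a" "2 * a \<le> b" "0 \<le> e" "e \<le> 2"
  shows "a powr e + b powr e \<le> 8 * (b - a) powr e"
proof -
  have "a powr e \<le> b powr e" "b powr e \<le> (2 * (b - a)) powr e"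
    using assms by (simp_all add: powr_mono2)
  moreover have "(2 * (b - a)) powr e = 2 powr e * (b - a) powr e"
    by (rule powr_mult)
  moreover have "2 powr e * (b - a) powr e \<le> 4 * (b - a) powr e"
    using assms powr_mono[of e 2 2] by (intro mult_right_mono) auto
  ultimately show ?thesis by simp
qed

lemma cov_gap_le_ordered:
  fixes H \<alpha> a b :: real
  assumes "0 < H" "H < 1" "1 - H < \<alpha>" "\<alpha> < 1" "0 < a" "a \<le> b"
  shows "cov_gap H \<alpha> a b \<le> 8 * \<bar>b - a\<bar> powr (2 * (H + \<alpha> - 1))"
proof -
  define \<beta> where "\<beta> = H + \<alpha> - 1"
  define \<gamma> where "\<gamma> = 1 - \<alpha>"
  have exps: "0 < \<beta>" "\<beta> < 1" "0 < \<gamma>" "\<gamma> < 1" "2 * H = 2 * \<beta> + 2 * \<gamma>"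
    using assms by (auto simp: \<beta>_def \<gamma>_def)
  have b: "0 < b" using assms by linarith
  have w: "0 < (a * b) powr \<gamma>" using assms b by simp
  have abs_eq: "\<bar>b - a\<bar> = b - a" using assms by simp
  define smooth where "smooth = a powr (2 * \<beta>) + b powr (2 * \<beta>)
    - (a powr (2 * H) + b powr (2 * H)) / (a * b) powr \<gamma>"
  have gap_eq: "cov_gap H \<alpha> a b = smooth + (b - a) powr (2 * H) / (a * b) powr \<gamma>"
    unfolding cov_gap_def smooth_def abs_eq \<beta>_def[symmetric] \<gamma>_def[symmetric]
    by (simp add: diff_divide_distrib add_divide_distrib)
  have smooth_nonpos: "smooth \<le> 0"
    using powr_rearrangement[of a b "2 * \<beta>" \<gamma>] assms b exps w
    by (simp add: smooth_def pos_le_divide_eq add.commute)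
  show ?thesis
  proof (cases "b \<le> 2 * a")
    case True
    have "(b - a) powr (2 * H) / (a * b) powr \<gamma> \<le> 2 * (b - a) powr (2 * \<beta>)"
      using near_diagonal_bound[of a b \<gamma> \<beta>] assms True exps w by (simp add: divide_le_eq)
    moreover have "0 \<le> (b - a) powr (2 * \<beta>)" by simp
    ultimately have "cov_gap H \<alpha> a b \<le> 8 * (b - a) powr (2 * \<beta>)"
      using gap_eq smooth_nonpos by linarith
    then show ?thesis using abs_eq by (simp add: \<beta>_def)
  next
    case False
    have "(b - a) powr (2 * H) \<le> b powr (2 * H)" using assms by (simp add: powr_mono2)
    then have "(b - a) powr (2 * H) - a powr (2 * H) - b powr (2 * H) \<le> 0"
      using powr_ge_zero[of a "2 * H"] by linarith
    then have "(b - a) powr (2 * H) / (a * b) powr \<gamma> - (a powr (2 * H) + b powr (2 * H)) / (a * b) powr \<gamma> \<le> 0"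
      using w by (simp add: diff_divide_distrib[symmetric] divide_nonpos_pos)
    moreover have "a powr (2 * \<beta>) + b powr (2 * \<beta>) \<le> 8 * (b - a) powr (2 * \<beta>)"
      using far_from_diagonal_bound[of a b "2 * \<beta>"] assms False exps by simp
    ultimately have "cov_gap H \<alpha> a b \<le> 8 * (b - a) powr (2 * \<beta>)"
      using gap_eq unfolding smooth_def by linarith
    then show ?thesis using abs_eq by (simp add: \<beta>_def)
  qed
qed

theorem lemmaA1:
  fixes H \<alpha> :: real
  assumes "0 < H" "H < 1" "1 - H < \<alpha>" "\<alpha> < 1"
  shows "\<exists>C::real. \<forall>z1 z2::real. 0 < z1 \<longrightarrow> 0 < z2 \<longrightarrow>
    z2 powr (2 * (H + \<alpha> - 1)) + z1 powr (2 * (H + \<alpha> - 1))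
      + (\<bar>z2 - z1\<bar> powr (2 * H) - z1 powr (2 * H) - z2 powr (2 * H)) / (z1 * z2) powr (1 - \<alpha>)
    \<le> C * \<bar>z2 - z1\<bar> powr (2 * (H + \<alpha> - 1))"
proof (intro exI allI impI)
  fix z1 z2 :: real
  assume "0 < z1" "0 < z2"
  have "cov_gap H \<alpha> z1 z2 \<le> 8 * \<bar>z2 - z1\<bar> powr (2 * (H + \<alpha> - 1))"
  proof (cases "z1 \<le> z2")
    case True
    then show ?thesis using cov_gap_le_ordered[OF assms \<open>0 < z1\<close>] by simp
  next
    case False
    then show ?thesis
      using cov_gap_le_ordered[OF assms \<open>0 < z2\<close>, of z1] cov_gap_sym[of H \<alpha> z1 z2]
      by (simp add: abs_minus_commute)
  qed
  then show "z2 powr (2 * (H + \<alpha> - 1)) + z1 powr (2 * (H + \<alpha> - 1))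
      + (\<bar>z2 - z1\<bar> powr (2 * H) - z1 powr (2 * H) - z2 powr (2 * H)) / (z1 * z2) powr (1 - \<alpha>)
    \<le> 8 * \<bar>z2 - z1\<bar> powr (2 * (H + \<alpha> - 1))"
    by (simp add: cov_gap_def)
qed

end
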